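(* For any set $\Phi\cup\{\psi\}$ of $\mathsf{BSML}^{\oslash}$-formulas, if $\Phi\vdash\psi$ in the natural deduction system $\mathcal{S}^{\oslash}$ described below, then $\Phi\models\psi$.
   Context: Syntax: $\mathsf{BSML}^{\oslash}$-formulas $\phi ::= p \mid \neg\phi \mid (\phi\wedge\phi) \mid (\phi\vee\phi) \mid \Diamond\phi \mid \mathrm{NE}\mid\oslash\phi$. Classical formulas ($\alpha,\beta$): built from $p,\neg,\wedge,\vee,\Diamond$. $\Box\phi:=\neg\Diamond\neg\phi$; $\bot:=p\wedge\neg p$; $\bot\!\!\!\bot:=\bot\wedge\mathrm{NE}$. Semantics on Kripke models $M=(W,R,V)$, states $s\subseteq W$: $s\models p$ iff $s\subseteq V(p)$; $s\dashv p$ iff $s\cap V(p)=\emptyset$; $s\models\mathrm{NE}$ iff $s\ne\emptyset$; $s\dashv\mathrm{NE}$ iff $s=\emptyset$; $s\models\neg\phi$ iff $s\dashv\phi$; $s\dashv\neg\phi$ iff $s\models\phi$; $s\models\phi\wedge\psi$ iff both; $s\dashv\phi\wedge\psi$ iff $s=t\cup u$, $t\dashv\phi$, $u\dashv\psi$; $s\models\phi\vee\psi$ iff $s=t\cup u$, $t\models\phi$, $u\models\psi$; $s\dashv\phi\vee\psi$ iff $s\dashv\phi$ and $s\dashv\psi$; $s\models\Diamond\phi$ iff each $w\in s$ has a nonempty $t\subseteq R[w]$ with $t\models\phi$; $s\dashv\Diamond\phi$ iff $R[w]\dashv\phi$ for all $w\in s$; $s\models\oslash\phi$ iff $s\models\phi$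 or $s=\emptyset$; $s\dashv\oslash\phi$ iff $s\dashv\phi$. $\Phi\models\psi$ iff every state supporting all of $\Phi$ supports $\psi$. An occurrence $[\psi]$ of a subformula in $\phi$ is called distributive if it is not within the scope of any $\neg$ or $\Diamond$ in $\phi$ (recall $\Box=\neg\Diamond\neg$); $\phi[\chi/\psi]$ denotes replacing that occurrence by $\chi$. System $\mathcal{S}^{\oslash}$ ($\Phi\vdash\psi$ iff some natural deduction derivation of $\psi$ has all undischarged assumptions in $\Phi$; "$A\Leftrightarrow B$" = both one-step rules): (a) $\wedge$I; $\wedge$E. (b) $\neg$I: from a derivation of $\bot$ from $\alpha$ infer $\neg\alpha$ discharging $\alpha$, provided its undischarged assumptions contain no $\mathrm{NE}$; from $\alpha,\neg\alpha$ infer $\beta$; $\neg\neg\phi\Leftrightarrow\phi$; $\neg(\phi\wedge\psi)\Leftrightarrow\neg\phi\vee\neg\psi$; $\neg(\phi\vee\psi)\Leftrightarrow\neg\phi\wedge\neg\psi$; $\neg\mathrm{NE}\Leftrightarrow\bot$. (c) from $\phi$ infer $\phi\vee\psi$ if $\psi$ contains no $\mathrm{NE}$; from $\phi$ infer $\phi\vee\phi$; from $\phi\vee\psi$ infer $\psi\vee\phi$; $\vee$E: from $\phi\vee\psi$ and derivations of $\chi$ from $\phi$ and from $\psi$ infer $\chi$ (discharging), provided the undischarged assumptions of the subderivations contain no $\mathrm{NE}$; from $\phi\vee\psi$ and a derivation of $\chi$ from $\psi$ whose undischarged assumptions contain no $\mathrm{NE}$ infer $\phi\vee\chi$. (d)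 from $\bot\vee\phi$ infer $\phi$; from $\bot\!\!\!\bot\vee\phi$ infer any $\psi$. (e) if $\psi$ derivable from $\phi$ alone, from $\Diamond\phi$ infer $\Diamond\psi$; if $\psi$ derivable from $\phi_1,\dots,\phi_n$ alone, from $\Box\phi_1,\dots,\Box\phi_n$ infer $\Box\psi$; $\neg\Diamond\phi\Leftrightarrow\Box\neg\phi$. (f) from $\Diamond(\phi\vee(\psi\wedge\mathrm{NE}))$ infer $\Diamond\psi$; from $\Diamond\phi,\Diamond\psi$ infer $\Diamond(\phi\vee\psi)$; from $\Box(\phi\wedge\mathrm{NE})$ infer $\Diamond\phi$; from $\Box\phi,\Diamond\psi$ infer $\Box(\phi\vee\psi)$. ($\oslash$) axiom $\oslash\mathrm{NE}$; from $\bot$ infer $\oslash\phi$; from $\phi$ infer $\oslash\phi$; $\oslash$E: for a distributive occurrence $[\oslash\psi]$ in $\phi$, from $\phi$, a derivation of $\chi$ from $\phi[\psi/\oslash\psi]$ and a derivation of $\chi$ from $\phi[\bot/\oslash\psi]$, infer $\chi$ (discharging); $\neg\oslash\phi\Leftrightarrow\neg\phi$; for a distributive occurrence $[\oslash\psi]$ in $\phi$: from $\Diamond\phi$ infer $\Diamond\phi[\psi/\oslash\psi]\vee\Diamond\phi[\bot/\oslash\psi]$, and from $\Box\phi$ infer $\Box\phi[\psi/\oslash\psi]\vee\Box\phi[\bot/\oslash\psi]$. *)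

theory Defs
  imports Main
begin

text \<open>Propositional variables are natural numbers. The constructor PWd is the
operator written as a slashed circle in the paper.\<close>

datatype form =
    PAtom nat
  | PNeg form
  | PConj form form
  | PDisj form form
  | PDia form
  | PNE
  | PWd form

fun classical :: "form \<Rightarrow> bool" where
  "classical (PAtom p) = True"
| "classical (PNeg a) = classical a"
| "classical (PConj a b) = (classical a \<and> classical b)"
| "classical (PDisj a b) = (classical a \<and> classical b)"
| "classical (PDia a) = classical a"
| "classical PNE = False"
| "classical (PWd a) = False"

fun noNE :: "form \<Rightarrow> bool" where
  "noNE (PAtom p) = True"
| "noNE (PNeg a) = noNE a"
| "noNE (PConj a b) = (noNE a \<and> noNE b)"
| "noNE (PDisj a b) = (noNE a \<and> noNE b)"
| "noNE (PDia a) = noNE a"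
| "noNE PNE = False"
| "noNE (PWd a) = noNE a"

definition PBox :: "form \<Rightarrow> form" where
  "PBox f = PNeg (PDia (PNeg f))"

definition PBot :: form where
  "PBot = PConj (PAtom 0) (PNeg (PAtom 0))"

definition PBBot :: form where
  "PBBot = PConj PBot PNE"

definition kmodel :: "'w set \<Rightarrow> ('w \<times> 'w) set \<Rightarrow> (nat \<Rightarrow> 'w set) \<Rightarrow> bool" where
  "kmodel W R V \<longleftrightarrow> R \<subseteq> W \<times> W \<and> (\<forall>p. V p \<subseteq> W)"

fun supp :: "('w \<times> 'w) set \<Rightarrow> (nat \<Rightarrow> 'w set) \<Rightarrow> 'w set \<Rightarrow> form \<Rightarrow> bool"
and anti :: "('w \<times> 'w) set \<Rightarrow> (nat \<Rightarrow> 'w set) \<Rightarrow> 'w set \<Rightarrow> form \<Rightarrow> bool" where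
  "supp R V s (PAtom p) = (s \<subseteq> V p)"
| "anti R V s (PAtom p) = (s \<inter> V p = {})"
| "supp R V s PNE = (s \<noteq> {})"
| "anti R V s PNE = (s = {})"
| "supp R V s (PNeg f) = anti R V s f"
| "anti R V s (PNeg f) = supp R V s f"
| "supp R V s (PConj f g) = (supp R V s f \<and> supp R V s g)"
| "anti R V s (PConj f g) = (\<exists>t u. s = t \<union> u \<and> anti R V t f \<and> anti R V u g)"
| "supp R V s (PDisj f g) = (\<exists>t u. s = t \<union> u \<and> supp R V t f \<and> supp R V u g)"
| "anti R V s (PDisj f g) = (anti R V s f \<and> anti R V s g)"
| "supp R V s (PDia f) = (\<forall>w\<in>s. \<exists>t. t \<noteq> {} \<and> t \<subseteq> R `` {w} \<and> supp R V t f)"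
| "anti R V s (PDia f) = (\<forall>w\<in>s. anti R V (R `` {w}) f)"
| "supp R V s (PWd f) = (supp R V s f \<or> s = {})"
| "anti R V s (PWd f) = anti R V s f"

text \<open>Semantic consequence, over all Kripke models whose worlds are drawn from
the type 'w (the theorem quantifies over every such type).\<close>
definition entails :: "'w itself \<Rightarrow> form set \<Rightarrow> form \<Rightarrow> bool" where
  "entails _ \<Phi> \<psi> \<longleftrightarrow>
     (\<forall>(W :: 'w set) R V s. kmodel W R V \<longrightarrow> s \<subseteq> W \<longrightarrow>
        (\<forall>\<phi>\<in>\<Phi>. supp R V s \<phi>) \<longrightarrow> supp R V s \<psi>)"

text \<open>Contexts built only from conjunction, disjunction and the slashed-circle
operator: the hole of such a context is exactly a distributive position
(not in the scope of negation or diamond).\<close>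

datatype dctx =
    Hole
  | CConjL dctx form
  | CConjR form dctx
  | CDisjL dctx form
  | CDisjR form dctx
  | CWd dctx

fun fill :: "dctx \<Rightarrow> form \<Rightarrow> form" where
  "fill Hole x = x"
| "fill (CConjL c b) x = PConj (fill c x) b"
| "fill (CConjR a c) x = PConj a (fill c x)"
| "fill (CDisjL c b) x = PDisj (fill c x) b"
| "fill (CDisjR a c) x = PDisj a (fill c x)"
| "fill (CWd c) x = PWd (fill c x)"

text \<open>ND G f: there is a natural deduction derivation of f whose set of
undischarged assumptions is G.\<close>

inductive ND :: "form set \<Rightarrow> form \<Rightarrow> bool" where
  assm: "ND {f} f"
| conjI: "ND A f \<Longrightarrow> ND B g \<Longrightarrow> ND (A \<union> B) (PConj f g)"
| conjE1: "ND A (PConj f g) \<Longrightarrow> ND A f"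
| conjE2: "ND A (PConj f g) \<Longrightarrow> ND A g"
| negI: "classical a \<Longrightarrow> ND A PBot \<Longrightarrow> (\<forall>x\<in>A - {a}. noNE x) \<Longrightarrow> ND (A - {a}) (PNeg a)"
| negE: "classical a \<Longrightarrow> classical b \<Longrightarrow> ND A a \<Longrightarrow> ND B (PNeg a) \<Longrightarrow> ND (A \<union> B) b"
| dnegE: "ND A (PNeg (PNeg f)) \<Longrightarrow> ND A f"
| dnegI: "ND A f \<Longrightarrow> ND A (PNeg (PNeg f))"
| dmConj1: "ND A (PNeg (PConj f g)) \<Longrightarrow> ND A (PDisj (PNeg f) (PNeg g))"
| dmConj2: "ND A (PDisj (PNeg f) (PNeg g)) \<Longrightarrow> ND A (PNeg (PConj f g))"
| dmDisj1: "ND A (PNeg (PDisj f g)) \<Longrightarrow> ND A (PConj (PNeg f) (PNeg g))"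
| dmDisj2: "ND A (PConj (PNeg f) (PNeg g)) \<Longrightarrow> ND A (PNeg (PDisj f g))"
| negNE1: "ND A (PNeg PNE) \<Longrightarrow> ND A PBot"
| negNE2: "ND A PBot \<Longrightarrow> ND A (PNeg PNE)"
| disjI: "noNE g \<Longrightarrow> ND A f \<Longrightarrow> ND A (PDisj f g)"
| disjDup: "ND A f \<Longrightarrow> ND A (PDisj f f)"
| disjComm: "ND A (PDisj f g) \<Longrightarrow> ND A (PDisj g f)"
| disjE: "ND A (PDisj f g) \<Longrightarrow> ND B h \<Longrightarrow> ND C h \<Longrightarrow>
          (\<forall>x\<in>B - {f}. noNE x) \<Longrightarrow> (\<forall>x\<in>C - {g}. noNE x) \<Longrightarrow>
          ND (A \<union> (B - {f}) \<union> (C - {g})) h"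
| disjSub: "ND A (PDisj f g) \<Longrightarrow> ND B h \<Longrightarrow> (\<forall>x\<in>B - {g}. noNE x) \<Longrightarrow>
          ND (A \<union> (B - {g})) (PDisj f h)"
| botDisj: "ND A (PDisj PBot f) \<Longrightarrow> ND A f"
| bbotDisj: "ND A (PDisj PBBot f) \<Longrightarrow> ND A g"
| diaMono: "B \<subseteq> {f} \<Longrightarrow> ND B g \<Longrightarrow> ND A (PDia f) \<Longrightarrow> ND A (PDia g)"
| boxMono: "ND B g \<Longrightarrow> (\<forall>x\<in>B. ND (D x) (PBox x)) \<Longrightarrow> ND (\<Union>x\<in>B. D x) (PBox g)"
| negDia1: "ND A (PNeg (PDia f)) \<Longrightarrow> ND A (PBox (PNeg f))"
| negDia2: "ND A (PBox (PNeg f)) \<Longrightarrow> ND A (PNeg (PDia f))"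
| diaNE: "ND A (PDia (PDisj f (PConj g PNE))) \<Longrightarrow> ND A (PDia g)"
| diaJoin: "ND A (PDia f) \<Longrightarrow> ND B (PDia g) \<Longrightarrow> ND (A \<union> B) (PDia (PDisj f g))"
| boxNE: "ND A (PBox (PConj f PNE)) \<Longrightarrow> ND A (PDia f)"
| boxDia: "ND A (PBox f) \<Longrightarrow> ND B (PDia g) \<Longrightarrow> ND (A \<union> B) (PBox (PDisj f g))"
| wdAx: "ND {} (PWd PNE)"
| wdBot: "ND A PBot \<Longrightarrow> ND A (PWd f)"
| wdI: "ND A f \<Longrightarrow> ND A (PWd f)"
| wdE: "ND A (fill c (PWd g)) \<Longrightarrow> ND B h \<Longrightarrow> ND C h \<Longrightarrow>
          ND (A \<union> (B - {fill c g}) \<union> (C - {fill c PBot})) h"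
| negWd1: "ND A (PNeg (PWd f)) \<Longrightarrow> ND A (PNeg f)"
| negWd2: "ND A (PNeg f) \<Longrightarrow> ND A (PNeg (PWd f))"
| wdDia: "ND A (PDia (fill c (PWd g))) \<Longrightarrow>
          ND A (PDisj (PDia (fill c g)) (PDia (fill c PBot)))"
| wdBox: "ND A (PBox (fill c (PWd g))) \<Longrightarrow>
          ND A (PDisj (PBox (fill c g)) (PBox (fill c PBot)))"

definition derivable :: "form set \<Rightarrow> form \<Rightarrow> bool" where
  "derivable \<Phi> \<psi> \<longleftrightarrow> (\<exists>G. G \<subseteq> \<Phi> \<and> ND G \<psi>)"

end

theory Submission
  imports Defs
begin

(* NE-free formulas are flat:
   a state supports them iff each of its singletons does, so they hold on the empty state
   and are downward closed; this is what makes the NE-free side conditions of the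
   discharging rules sound.  Classical formulas are moreover bivalent on singletons, so a
   classical formula and its negation are jointly supported only by the empty state.
   Every formula, NE included, is closed under binary unions, which lets disjunction
   elimination glue the two halves of a split state back together.  Finally, a state that
   supports a formula with a distributive occurrence of the weak operator applied to g
   supports the formula with g or with bottom in its place. *)

definition flat :: "('w \<times> 'w) set \<Rightarrow> (nat \<Rightarrow> 'w set) \<Rightarrow> form \<Rightarrow> bool" where
  "flat R V f \<longleftrightarrow> (\<forall>s. supp R V s f \<longleftrightarrow> (\<forall>w\<in>s. supp R V {w} f))"

(* flat_supp_iff loops as a simp rule; use it instantiated, or use the rules below. *)
lemma flat_supp_iff: "flat R V f \<Longrightarrow> supp R V s f \<longleftrightarrow> (\<forall>w\<in>s. supp R V {w} f)"
  unfolding flat_def by blast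

lemma flatI:
  assumes "\<And>s. \<forall>w\<in>s. supp R V {w} f \<Longrightarrow> supp R V s f"
    and "\<And>s w. supp R V s f \<Longrightarrow> w \<in> s \<Longrightarrow> supp R V {w} f"
  shows "flat R V f"
  unfolding flat_def using assms by blast

lemma flat_suppI: "flat R V f \<Longrightarrow> (\<And>w. w \<in> s \<Longrightarrow> supp R V {w} f) \<Longrightarrow> supp R V s f"
  unfolding flat_def by blast

lemma flat_suppD: "flat R V f \<Longrightarrow> supp R V s f \<Longrightarrow> w \<in> s \<Longrightarrow> supp R V {w} f"
  unfolding flat_def by blast

lemma flat_PDia: "flat R V (PDia f)"
  by (simp add: flat_def)

lemma flat_PBox: "flat R V (PBox f)"
  by (simp add: flat_def PBox_def)

lemma supp_PDisj_flat:
  assumes f: "flat R V f" and g: "flat R V g"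
  shows "supp R V s (PDisj f g) \<longleftrightarrow> (\<forall>w\<in>s. supp R V {w} f \<or> supp R V {w} g)"
proof
  assume "supp R V s (PDisj f g)"
  then obtain t u where "s = t \<union> u" "supp R V t f" "supp R V u g" by auto
  then show "\<forall>w\<in>s. supp R V {w} f \<or> supp R V {w} g"
    using flat_suppD[OF f] flat_suppD[OF g] by (metis Un_iff)
next
  assume split: "\<forall>w\<in>s. supp R V {w} f \<or> supp R V {w} g"
  let ?t = "{w\<in>s. supp R V {w} f}" and ?u = "{w\<in>s. supp R V {w} g}"
  have "s = ?t \<union> ?u" using split by blast
  moreover have "supp R V ?t f" by (rule flat_suppI[OF f]) simp
  moreover have "supp R V ?u g" by (rule flat_suppI[OF g]) simp
  ultimately show "supp R V s (PDisj f g)" unfolding supp.simps by blast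
qed

lemma flat_PDisj: "flat R V f \<Longrightarrow> flat R V g \<Longrightarrow> flat R V (PDisj f g)"
  by (rule flatI) (simp_all only: supp_PDisj_flat, auto)

lemma flat_PConj:
  assumes f: "flat R V f" and g: "flat R V g"
  shows "flat R V (PConj f g)"
proof (rule flatI)
  show "supp R V s (PConj f g)" if "\<forall>w\<in>s. supp R V {w} (PConj f g)" for s
    using that by (simp add: flat_suppI[OF f] flat_suppI[OF g])
qed (use flat_suppD[OF f] flat_suppD[OF g] in auto)

(* Flatness of PNeg f is flatness of the rejection condition of f; carrying it along
   turns the cases PNeg (PConj f g) and PNeg (PDisj f g) into the dual connectives. *)
lemma noNE_flat: "noNE f \<Longrightarrow> flat R V f \<and> flat R V (PNeg f)"
proof (induction f)
  case (PAtom p)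
  show ?case by (auto simp: flat_def)
next
  case (PNeg f)
  have "flat R V (PNeg (PNeg f)) \<longleftrightarrow> flat R V f" by (simp add: flat_def)
  with PNeg show ?case by simp
next
  case (PConj f g)
  have "flat R V (PNeg (PConj f g)) \<longleftrightarrow> flat R V (PDisj (PNeg f) (PNeg g))"
    by (simp add: flat_def)
  with PConj show ?case by (simp add: flat_PConj flat_PDisj)
next
  case (PDisj f g)
  have "flat R V (PNeg (PDisj f g)) \<longleftrightarrow> flat R V (PConj (PNeg f) (PNeg g))"
    by (simp add: flat_def)
  with PDisj show ?case by (simp add: flat_PConj flat_PDisj)
next
  case (PWd f)
  then have f: "flat R V f" and "flat R V (PNeg f)" by simp_all
  moreover have "flat R V (PNeg (PWd f)) \<longleftrightarrow> flat R V (PNeg f)" by (simp add: flat_def)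
  moreover have "flat R V (PWd f)"
  proof (rule flatI)
    show "supp R V s (PWd f)" if "\<forall>w\<in>s. supp R V {w} (PWd f)" for s
      using that flat_suppI[OF f, of s] by auto
    show "supp R V {w} (PWd f)" if "supp R V s (PWd f)" "w \<in> s" for s w
      using that flat_suppD[OF f, of s w] by auto
  qed
  ultimately show ?case by simp
next
  case (PDia f)
  show ?case by (auto simp: flat_def)
qed simp

lemma noNE_supp_empty: "noNE f \<Longrightarrow> supp R V {} f"
  by (rule flat_suppI[OF conjunct1[OF noNE_flat]]) simp_all

lemma noNE_supp_mono:
  assumes "noNE f" "supp R V s f" "t \<subseteq> s"
  shows "supp R V t f"
proof -
  have f: "flat R V f" using noNE_flat[OF assms(1)] by blast
  show ?thesis
    by (rule flat_suppI[OF f]) (use flat_suppD[OF f assms(2)] assms(3) in blast)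
qed

lemma classical_noNE: "classical f \<Longrightarrow> noNE f"
  by (induction f) auto

lemma classical_supp_singleton_iff:
  "classical f \<Longrightarrow> supp R V {w} f \<longleftrightarrow> \<not> anti R V {w} f"
proof (induction f arbitrary: w)
  case (PConj f g)
  then have "flat R V (PNeg f)" "flat R V (PNeg g)"
    by (simp_all add: noNE_flat classical_noNE)
  then have "anti R V {w} (PConj f g) \<longleftrightarrow> anti R V {w} f \<or> anti R V {w} g"
    using supp_PDisj_flat[of R V "PNeg f" "PNeg g" "{w}"] by simp
  with PConj show ?case by simp
next
  case (PDisj f g)
  then have "flat R V f" "flat R V g"
    by (simp_all add: noNE_flat classical_noNE)
  then have "supp R V {w} (PDisj f g) \<longleftrightarrow> supp R V {w} f \<or> supp R V {w} g"
    using supp_PDisj_flat[of R V f g "{w}"] by simp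
  with PDisj show ?case by simp
next
  case (PDia f)
  then have f: "flat R V f" and nf: "flat R V (PNeg f)"
    by (simp_all add: noNE_flat classical_noNE)
  have "supp R V {w} (PDia f) \<longleftrightarrow> (\<exists>v\<in>R `` {w}. supp R V {v} f)"
  proof
    assume "supp R V {w} (PDia f)"
    then obtain t where "t \<noteq> {}" "t \<subseteq> R `` {w}" "supp R V t f" by auto
    then show "\<exists>v\<in>R `` {w}. supp R V {v} f" using flat_suppD[OF f] by blast
  next
    assume "\<exists>v\<in>R `` {w}. supp R V {v} f"
    then show "supp R V {w} (PDia f)" by auto
  qed
  moreover have "anti R V {w} (PDia f) \<longleftrightarrow> (\<forall>v\<in>R `` {w}. anti R V {v} f)"
    using flat_supp_iff[OF nf, of "R `` {w}"] by simp
  ultimately show ?case using PDia by simp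
qed auto

lemma classical_anti_iff:
  assumes "classical f"
  shows "anti R V s f \<longleftrightarrow> (\<forall>w\<in>s. \<not> supp R V {w} f)"
proof -
  have "flat R V (PNeg f)" using noNE_flat classical_noNE assms by blast
  from flat_supp_iff[OF this, of s]
  have "anti R V s f \<longleftrightarrow> (\<forall>w\<in>s. anti R V {w} f)" by simp
  then show ?thesis by (simp add: classical_supp_singleton_iff[OF assms])
qed

lemma classical_supp_anti_empty:
  assumes "classical f" "supp R V s f" "anti R V s f"
  shows "s = {}"
  using noNE_supp_mono[OF classical_noNE[OF assms(1)] assms(2)] assms(3)
    classical_anti_iff[OF assms(1), of R V s] by blast

lemma supp_anti_Un:
  "(supp R V s f \<longrightarrow> supp R V t f \<longrightarrow> supp R V (s \<union> t) f) \<and>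
   (anti R V s f \<longrightarrow> anti R V t f \<longrightarrow> anti R V (s \<union> t) f)"
proof (induction f arbitrary: s t)
  case (PConj f g)
  have "anti R V (s \<union> t) (PConj f g)"
    if "anti R V s (PConj f g)" "anti R V t (PConj f g)" for s t
  proof -
    from that obtain s1 s2 t1 t2 where "s = s1 \<union> s2" "anti R V s1 f" "anti R V s2 g"
      and "t = t1 \<union> t2" "anti R V t1 f" "anti R V t2 g" by auto
    moreover from this have "anti R V (s1 \<union> t1) f" "anti R V (s2 \<union> t2) g"
      using PConj.IH by blast+
    moreover have "s \<union> t = (s1 \<union> t1) \<union> (s2 \<union> t2)" using calculation by blast
    ultimately show ?thesis unfolding anti.simps by blast
  qed
  with PConj.IH show ?case by auto
next
  case (PDisj f g)
  have "supp R V (s \<union> t) (PDisj f g)"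
    if "supp R V s (PDisj f g)" "supp R V t (PDisj f g)" for s t
  proof -
    from that obtain s1 s2 t1 t2 where "s = s1 \<union> s2" "supp R V s1 f" "supp R V s2 g"
      and "t = t1 \<union> t2" "supp R V t1 f" "supp R V t2 g" by auto
    moreover from this have "supp R V (s1 \<union> t1) f" "supp R V (s2 \<union> t2) g"
      using PDisj.IH by blast+
    moreover have "s \<union> t = (s1 \<union> t1) \<union> (s2 \<union> t2)" using calculation by blast
    ultimately show ?thesis unfolding supp.simps by blast
  qed
  with PDisj.IH show ?case by auto
qed auto

lemma supp_Un: "supp R V s f \<Longrightarrow> supp R V t f \<Longrightarrow> supp R V (s \<union> t) f"
  using supp_anti_Un by blast

lemma supp_PDisj_elim:
  assumes "supp R V s (PDisj f g)"
    and "\<And>t. t \<subseteq> s \<Longrightarrow> supp R V t f \<Longrightarrow> supp R V t h"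
    and "\<And>u. u \<subseteq> s \<Longrightarrow> supp R V u g \<Longrightarrow> supp R V u h"
  shows "supp R V s h"
proof -
  from assms(1) obtain t u where "s = t \<union> u" "supp R V t f" "supp R V u g" by auto
  with assms(2,3) show ?thesis using supp_Un[of R V t h u] by blast
qed

lemma supp_PDisj_right_mono:
  assumes "supp R V s (PDisj f g)"
    and "\<And>u. u \<subseteq> s \<Longrightarrow> supp R V u g \<Longrightarrow> supp R V u h"
  shows "supp R V s (PDisj f h)"
proof -
  from assms(1) obtain t u where "s = t \<union> u" "supp R V t f" "supp R V u g" by auto
  with assms(2) show ?thesis unfolding supp.simps by blast
qed

lemma supp_PBot [simp]: "supp R V s PBot \<longleftrightarrow> s = {}"
  by (auto simp: PBot_def)

lemma supp_PBox [simp]: "supp R V s (PBox f) \<longleftrightarrow> (\<forall>w\<in>s. supp R V (R `` {w}) f)"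
  by (simp add: PBox_def)

lemma supp_singleton_PDiaI:
  "t \<noteq> {} \<Longrightarrow> t \<subseteq> R `` {w} \<Longrightarrow> supp R V t f \<Longrightarrow> supp R V {w} (PDia f)"
  by auto

lemma supp_PDiaE:
  assumes "supp R V s (PDia f)" "w \<in> s"
  obtains t where "t \<noteq> {}" "t \<subseteq> R `` {w}" "supp R V t f"
  using assms by (simp only: supp.simps) blast

lemma supp_PDia_mono:
  assumes "supp R V s (PDia f)" and "\<And>t. supp R V t f \<Longrightarrow> supp R V t g"
  shows "supp R V s (PDia g)"
proof (rule flat_suppI[OF flat_PDia])
  fix w assume "w \<in> s"
  with assms(1) obtain t where "t \<noteq> {}" "t \<subseteq> R `` {w}" "supp R V t f"
    by (rule supp_PDiaE)
  from this(1,2) assms(2)[OF this(3)] show "supp R V {w} (PDia g)"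
    by (rule supp_singleton_PDiaI)
qed

lemma supp_PDia_PDisj_NE_D:
  assumes "supp R V s (PDia (PDisj f (PConj g PNE)))"
  shows "supp R V s (PDia g)"
proof (rule flat_suppI[OF flat_PDia])
  fix w assume "w \<in> s"
  with assms obtain t where t: "t \<noteq> {}" "t \<subseteq> R `` {w}" "supp R V t (PDisj f (PConj g PNE))"
    by (rule supp_PDiaE)
  then obtain t' u where "t = t' \<union> u" "u \<noteq> {}" "supp R V u g" by auto
  moreover from this(1) t(2) have "u \<subseteq> R `` {w}" by simp
  ultimately show "supp R V {w} (PDia g)" by (blast intro: supp_singleton_PDiaI)
qed

lemma supp_PDia_PDisjI:
  assumes "supp R V s (PDia f)" and "supp R V s (PDia g)"
  shows "supp R V s (PDia (PDisj f g))"
proof (rule flat_suppI[OF flat_PDia])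
  fix w assume w: "w \<in> s"
  from assms(1) w obtain t1 where "t1 \<noteq> {}" "t1 \<subseteq> R `` {w}" "supp R V t1 f"
    by (rule supp_PDiaE)
  moreover from assms(2) w obtain t2 where "t2 \<noteq> {}" "t2 \<subseteq> R `` {w}" "supp R V t2 g"
    by (rule supp_PDiaE)
  ultimately have "t1 \<union> t2 \<noteq> {}" "t1 \<union> t2 \<subseteq> R `` {w}" "supp R V (t1 \<union> t2) (PDisj f g)"
    by auto
  then show "supp R V {w} (PDia (PDisj f g))" by (rule supp_singleton_PDiaI)
qed

lemma supp_PBox_PConj_NE_D:
  assumes "supp R V s (PBox (PConj f PNE))"
  shows "supp R V s (PDia f)"
proof (rule flat_suppI[OF flat_PDia])
  fix w assume "w \<in> s"
  with assms have "R `` {w} \<noteq> {}" and "supp R V (R `` {w}) f" by simp_all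
  from this(1) subset_refl this(2) show "supp R V {w} (PDia f)"
    by (rule supp_singleton_PDiaI)
qed

lemma supp_PBox_PDisjI:
  assumes "supp R V s (PBox f)" and "supp R V s (PDia g)"
  shows "supp R V s (PBox (PDisj f g))"
proof -
  have "supp R V (R `` {w}) (PDisj f g)" if w: "w \<in> s" for w
  proof -
    from assms(2) w obtain t where "t \<noteq> {}" "t \<subseteq> R `` {w}" "supp R V t g"
      by (rule supp_PDiaE)
    moreover from assms(1) w have "supp R V (R `` {w}) f" by simp
    moreover from \<open>t \<subseteq> R `` {w}\<close> have "R `` {w} = R `` {w} \<union> t" by blast
    ultimately show ?thesis unfolding supp.simps by blast
  qed
  then show ?thesis by simp
qed

lemma supp_fill_PWd:
  "supp R V s (fill c (PWd g)) \<Longrightarrow> supp R V s (fill c g) \<or> supp R V s (fill c PBot)"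
proof (induction c arbitrary: s)
  case (CDisjL c b)
  then show ?case by fastforce
next
  case (CDisjR a c)
  then show ?case by fastforce
qed auto

lemma supp_PDia_fill_PWd:
  assumes "supp R V s (PDia (fill c (PWd g)))"
  shows "supp R V s (PDisj (PDia (fill c g)) (PDia (fill c PBot)))"
proof -
  have "supp R V {w} (PDia (fill c g)) \<or> supp R V {w} (PDia (fill c PBot))" if "w \<in> s" for w
  proof -
    from assms that obtain t where t: "t \<noteq> {}" "t \<subseteq> R `` {w}" "supp R V t (fill c (PWd g))"
      by (rule supp_PDiaE)
    from supp_fill_PWd[OF t(3)] show ?thesis
      using supp_singleton_PDiaI[OF t(1,2)] by blast
  qed
  then show ?thesis using supp_PDisj_flat[OF flat_PDia flat_PDia] by blast
qed

lemma supp_PBox_fill_PWd: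
  assumes "supp R V s (PBox (fill c (PWd g)))"
  shows "supp R V s (PDisj (PBox (fill c g)) (PBox (fill c PBot)))"
proof -
  have "supp R V {w} (PBox (fill c g)) \<or> supp R V {w} (PBox (fill c PBot))" if "w \<in> s" for w
  proof -
    from assms that have "supp R V (R `` {w}) (fill c (PWd g))" by simp
    from supp_fill_PWd[OF this] show ?thesis by simp
  qed
  then show ?thesis using supp_PDisj_flat[OF flat_PBox flat_PBox] by blast
qed

lemma supp_discharged_mono:
  assumes "\<forall>x\<in>B - {f}. noNE x" "\<forall>x\<in>B - {f}. supp R V s x" "t \<subseteq> s" "supp R V t f"
  shows "\<forall>x\<in>B. supp R V t x"
  using assms noNE_supp_mono by blast

lemma ND_sound:
  assumes "ND G f" and "\<forall>g\<in>G. supp R V s g"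
  shows "supp R V s f"
  using assms
proof (induction arbitrary: s rule: ND.induct)
  case (negI a A)
  have "\<not> supp R V {w} a" if "w \<in> s" for w
  proof
    assume "supp R V {w} a"
    with that have "\<forall>g\<in>A. supp R V {w} g"
      using supp_discharged_mono[OF negI.hyps(3) negI.prems] by blast
    then have "supp R V {w} PBot" by (rule negI.IH)
    then show False by simp
  qed
  then show ?case using classical_anti_iff[OF negI.hyps(1), of R V s] by simp
next
  case (negE a b A B)
  have "supp R V s a" and "anti R V s a"
    using negE.IH negE.prems by simp_all
  with negE.hyps(1) have "s = {}" by (rule classical_supp_anti_empty)
  then show ?case using noNE_supp_empty[OF classical_noNE[OF negE.hyps(2)]] by simp
next
  case (disjI g A f)
  have "s = s \<union> {}" by simp
  with disjI.IH[OF disjI.prems] noNE_supp_empty[OF disjI.hyps(1)] show ?case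
    unfolding supp.simps by blast
next
  case (disjDup A f)
  have "s = s \<union> s" by simp
  with disjDup.IH[OF disjDup.prems] show ?case
    unfolding supp.simps by blast
next
  case (disjComm A f g)
  from disjComm.IH[OF disjComm.prems] show ?case
    unfolding supp.simps by (metis sup_commute)
next
  case (disjE A f g B h C)
  from disjE.prems have sA: "\<forall>x\<in>A. supp R V s x" and sB: "\<forall>x\<in>B - {f}. supp R V s x"
    and sC: "\<forall>x\<in>C - {g}. supp R V s x" by auto
  show ?case
  proof (rule supp_PDisj_elim[OF disjE.IH(1)[OF sA]])
    show "supp R V t h" if "t \<subseteq> s" "supp R V t f" for t
      using supp_discharged_mono[OF disjE.hyps(4) sB that] by (rule disjE.IH(2))
    show "supp R V u h" if "u \<subseteq> s" "supp R V u g" for u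
      using supp_discharged_mono[OF disjE.hyps(5) sC that] by (rule disjE.IH(3))
  qed
next
  case (disjSub A f g B h)
  from disjSub.prems have sA: "\<forall>x\<in>A. supp R V s x" and sB: "\<forall>x\<in>B - {g}. supp R V s x"
    by auto
  show ?case
  proof (rule supp_PDisj_right_mono[OF disjSub.IH(1)[OF sA]])
    show "supp R V u h" if "u \<subseteq> s" "supp R V u g" for u
      using supp_discharged_mono[OF disjSub.hyps(3) sB that] by (rule disjSub.IH(2))
  qed
next
  case (diaMono B f g A)
  show ?case
  proof (rule supp_PDia_mono[OF diaMono.IH(2)[OF diaMono.prems]])
    show "supp R V t g" if "supp R V t f" for t
      by (rule diaMono.IH(1)) (use diaMono.hyps(1) that in blast)
  qed
next
  case (boxMono B g D)
  have "supp R V s (PBox x)" if "x \<in> B" for x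
  proof -
    have "\<forall>y\<in>D x. supp R V s y" using boxMono.prems that by blast
    then show ?thesis using boxMono.IH(2) that by blast
  qed
  then show ?case using boxMono.IH(1) by simp
next
  case (diaNE A f g)
  show ?case by (rule supp_PDia_PDisj_NE_D[OF diaNE.IH[OF diaNE.prems]])
next
  case (diaJoin A f B g)
  from diaJoin.prems have "\<forall>x\<in>A. supp R V s x" and "\<forall>x\<in>B. supp R V s x" by simp_all
  from diaJoin.IH(1)[OF this(1)] diaJoin.IH(2)[OF this(2)] show ?case
    by (rule supp_PDia_PDisjI)
next
  case (boxNE A f)
  show ?case by (rule supp_PBox_PConj_NE_D[OF boxNE.IH[OF boxNE.prems]])
next
  case (boxDia A f B g)
  from boxDia.prems have "\<forall>x\<in>A. supp R V s x" and "\<forall>x\<in>B. supp R V s x" by simp_all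
  from boxDia.IH(1)[OF this(1)] boxDia.IH(2)[OF this(2)] show ?case
    by (rule supp_PBox_PDisjI)
next
  case (wdE A c g B h C)
  from wdE.prems have sA: "\<forall>x\<in>A. supp R V s x" and sB: "\<forall>x\<in>B - {fill c g}. supp R V s x"
    and sC: "\<forall>x\<in>C - {fill c PBot}. supp R V s x" by auto
  from supp_fill_PWd[OF wdE.IH(1)[OF sA]] show ?case
  proof
    assume "supp R V s (fill c g)"
    with sB show ?case by (intro wdE.IH(2)) blast
  next
    assume "supp R V s (fill c PBot)"
    with sC show ?case by (intro wdE.IH(3)) blast
  qed
next
  case (wdDia A c g)
  show ?case by (rule supp_PDia_fill_PWd[OF wdDia.IH[OF wdDia.prems]])
next
  case (wdBox A c g)
  show ?case by (rule supp_PBox_fill_PWd[OF wdBox.IH[OF wdBox.prems]])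
qed (auto simp: PBBot_def PBox_def)

theorem theorem4p25:
  fixes \<Phi> :: "form set" and \<psi> :: form
  assumes "derivable \<Phi> \<psi>"
  shows "entails TYPE('w) \<Phi> \<psi>"
proof -
  from assms obtain G where "G \<subseteq> \<Phi>" and "ND G \<psi>" unfolding derivable_def by blast
  then show ?thesis unfolding entails_def using ND_sound by blast
qed

end
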